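(* Let $U$ be a proper graded submodule of $M$. Then $U$ is a graded weakly $J_{gr}$-semiprime submodule of $M$ if and only if for every $r_g\in h(R)$, every graded submodule $K$ of $M$ and every $n\in\mathbb{Z}^+$ with $\{0\}\neq r_g^nK\subseteq U$, we have $r_gK\subseteq U+J_{gr}(M)$.
   Context: Standing conventions: $\Gamma$ is a group, $R=\bigoplus_{g\in\Gamma}R_g$ is a commutative $\Gamma$-graded ring with identity, and $M=\bigoplus_{g\in\Gamma}M_g$ is a unitary $\Gamma$-graded $R$-module. $h(R)=\bigcup_gR_g$, $h(M)=\bigcup_gM_g$ are the homogeneous elements. A submodule $U$ is graded if $U=\bigoplus_g(U\cap M_g)$. A graded submodule $U\neq M$ is Gr-maximal if every graded submodule $L$ with $U\subseteq L\subseteq M$ equals $U$ or $M$. $J_{gr}(M)$ is the intersection of all Gr-maximal submodules of $M$ ($=M$ if there are none). A proper graded submodule $U$ of $M$ is graded weakly $J_{gr}$-semiprime if whenever $r_g\in h(R)$, $m_h\in h(M)$, $n\in\mathbb{Z}^+$ and $0\neq r_g^nm_h\in U$, then $r_gm_h\in U+J_{gr}(M)$. *)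

theory Defs
  imports Main "HOL.Modules"
begin

definition is_direct_sum :: "'b::comm_monoid_add set \<Rightarrow> ('g \<Rightarrow> 'b set) \<Rightarrow> bool" where
  "is_direct_sum S A \<longleftrightarrow>
     (\<forall>x\<in>S. \<exists>!c. finite {g. c g \<noteq> 0} \<and> (\<forall>g. c g \<in> A g) \<and> x = (\<Sum>g\<in>{g. c g \<noteq> 0}. c g))
   \<and> (\<forall>c. finite {g. c g \<noteq> 0} \<and> (\<forall>g. c g \<in> A g) \<longrightarrow> (\<Sum>g\<in>{g. c g \<noteq> 0}. c g) \<in> S)"

definition additive_subgroup :: "'b::ab_group_add set \<Rightarrow> bool" where
  "additive_subgroup S \<longleftrightarrow> 0 \<in> S \<and> (\<forall>x\<in>S. \<forall>y\<in>S. x - y \<in> S)"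

definition graded_ring :: "('g::group_add \<Rightarrow> 'r::comm_ring_1 set) \<Rightarrow> bool" where
  "graded_ring Rg \<longleftrightarrow>
     (\<forall>g. additive_subgroup (Rg g)) \<and>
     (\<forall>g h. \<forall>a\<in>Rg g. \<forall>b\<in>Rg h. a * b \<in> Rg (g + h)) \<and>
     is_direct_sum (UNIV :: 'r set) Rg"

definition graded_module ::
  "('g::group_add \<Rightarrow> 'r::comm_ring_1 set) \<Rightarrow> ('r \<Rightarrow> 'm::ab_group_add \<Rightarrow> 'm) \<Rightarrow> ('g \<Rightarrow> 'm set) \<Rightarrow> bool" where
  "graded_module Rg sc Mg \<longleftrightarrow>
     graded_ring Rg \<and> module sc \<and>
     (\<forall>g. additive_subgroup (Mg g)) \<and>
     (\<forall>g h. \<forall>a\<in>Rg g. \<forall>m\<in>Mg h. sc a m \<in> Mg (g + h)) \<and>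
     is_direct_sum (UNIV :: 'm set) Mg"

definition hom_R :: "('g \<Rightarrow> 'r set) \<Rightarrow> 'r set" where
  "hom_R Rg = (\<Union>g. Rg g)"

definition hom_M :: "('g \<Rightarrow> 'm set) \<Rightarrow> 'm set" where
  "hom_M Mg = (\<Union>g. Mg g)"

definition graded_submodule :: "('r::comm_ring_1 \<Rightarrow> 'm::ab_group_add \<Rightarrow> 'm) \<Rightarrow> ('g \<Rightarrow> 'm set) \<Rightarrow> 'm set \<Rightarrow> bool" where
  "graded_submodule sc Mg U \<longleftrightarrow> module.subspace sc U \<and> is_direct_sum U (\<lambda>g. U \<inter> Mg g)"

definition gr_maximal :: "('r::comm_ring_1 \<Rightarrow> 'm::ab_group_add \<Rightarrow> 'm) \<Rightarrow> ('g \<Rightarrow> 'm set) \<Rightarrow> 'm set \<Rightarrow> bool" where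
  "gr_maximal sc Mg U \<longleftrightarrow> graded_submodule sc Mg U \<and> U \<noteq> UNIV \<and>
     (\<forall>L. graded_submodule sc Mg L \<and> U \<subseteq> L \<longrightarrow> L = U \<or> L = UNIV)"

text \<open>J_gr(M): intersection of all Gr-maximal submodules (M itself if there are none,
  which is automatic since the intersection of the empty family is UNIV).\<close>
definition J_gr :: "('r::comm_ring_1 \<Rightarrow> 'm::ab_group_add \<Rightarrow> 'm) \<Rightarrow> ('g \<Rightarrow> 'm set) \<Rightarrow> 'm set" where
  "J_gr sc Mg = \<Inter>{U. gr_maximal sc Mg U}"

definition set_sum :: "'m::plus set \<Rightarrow> 'm set \<Rightarrow> 'm set" where
  "set_sum A B = {a + b | a b. a \<in> A \<and> b \<in> B}"

definition graded_weakly_Jgr_semiprime ::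
  "('g \<Rightarrow> 'r::comm_ring_1 set) \<Rightarrow> ('r \<Rightarrow> 'm::ab_group_add \<Rightarrow> 'm) \<Rightarrow> ('g \<Rightarrow> 'm set) \<Rightarrow> 'm set \<Rightarrow> bool" where
  "graded_weakly_Jgr_semiprime Rg sc Mg U \<longleftrightarrow>
     graded_submodule sc Mg U \<and> U \<noteq> UNIV \<and>
     (\<forall>r m (n::nat). r \<in> hom_R Rg \<longrightarrow> m \<in> hom_M Mg \<longrightarrow> n > 0 \<longrightarrow>
        sc (r ^ n) m \<noteq> 0 \<longrightarrow> sc (r ^ n) m \<in> U \<longrightarrow> sc r m \<in> set_sum U (J_gr sc Mg))"

end

theory Submission
  imports Defs
begin

text \<open>For a homogeneous \<open>r\<close> the set \<open>(U :\<^sub>M r) = {z. r z \<in> U}\<close> is again a graded submodule.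
  Hence the weakly \<open>J\<^sub>g\<^sub>r\<close>-semiprime condition for one homogeneous \<open>m\<close> with \<open>r\<^sup>n m \<in> U\<close>
  already follows from the submodule condition for \<open>K = (U :\<^sub>M r\<^sup>n)\<close>. Conversely, \<open>r K\<close>
  is generated by the \<open>r m\<close> with \<open>m\<close> a homogeneous component of an element of \<open>K\<close>, and
  those \<open>m\<close> with \<open>r\<^sup>n m = 0\<close> are harmless: for every Gr-maximal \<open>L\<close>, maximality forces
  \<open>(L :\<^sub>M r)\<close> to be \<open>L\<close> or \<open>M\<close>, and the first case would propagate \<open>r m \<notin> L\<close> to
  \<open>r\<^sup>n m \<notin> L\<close>; so \<open>r m \<in> J\<^sub>g\<^sub>r(M)\<close>.\<close>

definition grading_decomp :: "('g \<Rightarrow> 'm::ab_group_add set) \<Rightarrow> 'm \<Rightarrow> ('g \<Rightarrow> 'm) \<Rightarrow> bool" where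
  "grading_decomp Mg x c \<longleftrightarrow>
     finite {g. c g \<noteq> 0} \<and> (\<forall>g. c g \<in> Mg g) \<and> x = (\<Sum>g\<in>{g. c g \<noteq> 0}. c g)"

lemma graded_module_decomp_ex1:
  assumes "graded_module Rg sc Mg"
  shows "\<exists>!c. grading_decomp Mg x c"
proof -
  have "is_direct_sum UNIV Mg" using assms unfolding graded_module_def by blast
  then show ?thesis unfolding is_direct_sum_def grading_decomp_def by simp
qed

lemma graded_module_decomp_unique:
  assumes "graded_module Rg sc Mg" "grading_decomp Mg x c" "grading_decomp Mg x d"
  shows "c = d"
  using graded_module_decomp_ex1[OF assms(1), of x] assms(2,3) by blast

lemma grading_decomp_scale:
  assumes gm: "graded_module Rg sc Mg" and s: "s \<in> Rg \<delta>" and dc: "grading_decomp Mg x c"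
  shows "grading_decomp Mg (sc s x) (\<lambda>h. sc s (c (-\<delta> + h)))"
proof -
  interpret module sc using gm unfolding graded_module_def by blast
  define S where "S = {g. c g \<noteq> 0}"
  define c' where "c' = (\<lambda>h. sc s (c (-\<delta> + h)))"
  have finS: "finite S" using dc unfolding grading_decomp_def S_def by blast
  have support: "{h. c' h \<noteq> 0} \<subseteq> (\<lambda>g. \<delta> + g) ` S"
  proof
    fix h assume "h \<in> {h. c' h \<noteq> 0}"
    then have "c (-\<delta> + h) \<noteq> 0" unfolding c'_def by auto
    moreover have "h = \<delta> + (-\<delta> + h)" by (simp add: add.assoc[symmetric])
    ultimately show "h \<in> (\<lambda>g. \<delta> + g) ` S" unfolding S_def by blast
  qed
  have degree: "c' h \<in> Mg h" for h
  proof -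
    have "c (-\<delta> + h) \<in> Mg (-\<delta> + h)" using dc unfolding grading_decomp_def by blast
    then have "sc s (c (-\<delta> + h)) \<in> Mg (\<delta> + (-\<delta> + h))"
      using gm s unfolding graded_module_def by blast
    then show ?thesis unfolding c'_def by (simp add: add.assoc[symmetric])
  qed
  have "(\<Sum>h\<in>{h. c' h \<noteq> 0}. c' h) = (\<Sum>h\<in>(\<lambda>g. \<delta> + g) ` S. c' h)"
    by (rule sum.mono_neutral_left) (use finS support in auto)
  also have "\<dots> = (\<Sum>g\<in>S. c' (\<delta> + g))"
    by (rule sum.reindex[unfolded comp_def]) (auto simp: inj_on_def)
  also have "\<dots> = sc s x"
    using dc unfolding c'_def grading_decomp_def S_def
    by (simp add: add.assoc[symmetric] scale_sum_right)
  finally show ?thesis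
    using finite_subset[OF support finite_imageI[OF finS]] degree unfolding grading_decomp_def c'_def by simp
qed

lemma graded_submodule_iff_components:
  assumes gm: "graded_module Rg sc Mg" and sK: "module.subspace sc K"
  shows "graded_submodule sc Mg K \<longleftrightarrow> (\<forall>x\<in>K. \<forall>c. grading_decomp Mg x c \<longrightarrow> (\<forall>g. c g \<in> K))"
proof
  assume "graded_submodule sc Mg K"
  then have DS: "is_direct_sum K (\<lambda>g. K \<inter> Mg g)" unfolding graded_submodule_def by blast
  show "\<forall>x\<in>K. \<forall>c. grading_decomp Mg x c \<longrightarrow> (\<forall>g. c g \<in> K)"
  proof (intro ballI allI impI)
    fix x c g assume x: "x \<in> K" and dc: "grading_decomp Mg x c"
    obtain e where e: "finite {g. e g \<noteq> 0}" "\<forall>g. e g \<in> K \<inter> Mg g"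
      "x = (\<Sum>g\<in>{g. e g \<noteq> 0}. e g)"
      using DS x unfolding is_direct_sum_def by blast
    then have "c = e"
      using graded_module_decomp_unique[OF gm dc] unfolding grading_decomp_def by blast
    then show "c g \<in> K" using e by blast
  qed
next
  assume H: "\<forall>x\<in>K. \<forall>c. grading_decomp Mg x c \<longrightarrow> (\<forall>g. c g \<in> K)"
  interpret module sc using gm unfolding graded_module_def by blast
  have "\<exists>!c. finite {g. c g \<noteq> 0} \<and> (\<forall>g. c g \<in> K \<inter> Mg g) \<and> x = (\<Sum>g\<in>{g. c g \<noteq> 0}. c g)"
    if "x \<in> K" for x
  proof -
    obtain c where dc: "grading_decomp Mg x c" using graded_module_decomp_ex1[OF gm] by blast
    then show ?thesis
      using H \<open>x \<in> K\<close> graded_module_decomp_unique[OF gm dc]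
      unfolding grading_decomp_def by (intro ex1I[of _ c]) blast+
  qed
  moreover have "(\<Sum>g\<in>{g. c g \<noteq> 0}. c g) \<in> K" if "\<forall>g. c g \<in> K \<inter> Mg g" for c
    by (rule subspace_sum[OF sK]) (use that in blast)
  ultimately show "graded_submodule sc Mg K"
    unfolding graded_submodule_def is_direct_sum_def using sK by blast
qed

lemma graded_submodule_colon:
  assumes gm: "graded_module Rg sc Mg" and gL: "graded_submodule sc Mg L" and s: "s \<in> Rg \<delta>"
  shows "graded_submodule sc Mg {z. sc s z \<in> L}"
proof -
  interpret module sc using gm unfolding graded_module_def by blast
  have sL: "subspace L" using gL unfolding graded_submodule_def by blast
  have sK: "subspace {z. sc s z \<in> L}"
  proof (rule subspaceI)
    show "0 \<in> {z. sc s z \<in> L}" using subspace_0[OF sL] by simp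
    show "x + y \<in> {z. sc s z \<in> L}" if "x \<in> {z. sc s z \<in> L}" "y \<in> {z. sc s z \<in> L}" for x y
      using that subspace_add[OF sL] by (simp add: scale_right_distrib)
    show "sc c x \<in> {z. sc s z \<in> L}" if "x \<in> {z. sc s z \<in> L}" for c x
      using that subspace_scale[OF sL, of "sc s x" c] by (simp add: mult.commute)
  qed
  have L_components: "\<forall>x\<in>L. \<forall>c. grading_decomp Mg x c \<longrightarrow> (\<forall>g. c g \<in> L)"
    using graded_submodule_iff_components[OF gm sL] gL by blast
  show ?thesis
  proof (subst graded_submodule_iff_components[OF gm sK], intro ballI allI impI)
    fix x c g assume x: "x \<in> {z. sc s z \<in> L}" and dc: "grading_decomp Mg x c"
    have "sc s (c (-\<delta> + (\<delta> + g))) \<in> L"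
      using L_components grading_decomp_scale[OF gm s dc] x by blast
    then show "c g \<in> {z. sc s z \<in> L}" by (simp add: add.assoc[symmetric])
  qed
qed

lemma hom_R_power:
  assumes "graded_ring Rg" and "r \<in> hom_R Rg" and "n > 0"
  shows "r ^ n \<in> hom_R Rg"
  using \<open>n > 0\<close>
proof (induction n)
  case (Suc n)
  obtain g where g: "r \<in> Rg g" using assms(2) unfolding hom_R_def by blast
  show ?case
  proof (cases "n = 0")
    case False
    then obtain h where "r ^ n \<in> Rg h" using Suc unfolding hom_R_def by blast
    then have "r * r ^ n \<in> Rg (g + h)" using assms(1) g unfolding graded_ring_def by blast
    then show ?thesis unfolding hom_R_def by auto
  qed (use assms(2) in simp)
qed simp

lemma subspace_J_gr:
  assumes "graded_module Rg sc Mg"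
  shows "module.subspace sc (J_gr sc Mg)"
proof -
  interpret module sc using assms unfolding graded_module_def by blast
  show ?thesis unfolding J_gr_def
    by (rule subspace_Inter) (auto simp: gr_maximal_def graded_submodule_def)
qed

lemma subspace_set_sum:
  assumes "module sc" and A: "module.subspace sc A" and B: "module.subspace sc B"
  shows "module.subspace sc (set_sum A B)"
proof -
  interpret module sc by fact
  show ?thesis
  proof (rule subspaceI)
    show "0 \<in> set_sum A B"
      unfolding set_sum_def using subspace_0[OF A] subspace_0[OF B] by force
    show "x + y \<in> set_sum A B" if x: "x \<in> set_sum A B" and y: "y \<in> set_sum A B" for x y
    proof -
      obtain a b a' b' where "x = a + b" "y = a' + b'" "a \<in> A" "b \<in> B" "a' \<in> A" "b' \<in> B"
        using x y unfolding set_sum_def by blast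
      then have "x + y = (a + a') + (b + b')" "a + a' \<in> A" "b + b' \<in> B"
        using subspace_add[OF A] subspace_add[OF B] by (auto simp: algebra_simps)
      then show ?thesis unfolding set_sum_def by blast
    qed
    show "sc c x \<in> set_sum A B" if x: "x \<in> set_sum A B" for c x
    proof -
      obtain a b where "x = a + b" "a \<in> A" "b \<in> B"
        using x unfolding set_sum_def by blast
      then have "sc c x = sc c a + sc c b" "sc c a \<in> A" "sc c b \<in> B"
        using subspace_scale[OF A] subspace_scale[OF B] by (auto simp: scale_right_distrib)
      then show ?thesis unfolding set_sum_def by blast
    qed
  qed
qed

lemma set_sum_superset_right:
  fixes A B :: "'a::monoid_add set"
  assumes "0 \<in> A"
  shows "B \<subseteq> set_sum A B"
proof
  fix b assume "b \<in> B"
  moreover have "b = 0 + b" by simp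
  ultimately show "b \<in> set_sum A B" using assms unfolding set_sum_def by blast
qed

lemma scale_in_J_gr_if_power_annihilates:
  assumes gm: "graded_module Rg sc Mg" and r: "r \<in> hom_R Rg" and zero: "sc (r ^ n) y = 0"
  shows "sc r y \<in> J_gr sc Mg"
  unfolding J_gr_def
proof (rule InterI)
  interpret module sc using gm unfolding graded_module_def by blast
  fix L assume "L \<in> {U. gr_maximal sc Mg U}"
  then have gL: "graded_submodule sc Mg L"
    and maxL: "\<forall>L'. graded_submodule sc Mg L' \<and> L \<subseteq> L' \<longrightarrow> L' = L \<or> L' = UNIV"
    unfolding gr_maximal_def by blast+
  have sL: "subspace L" using gL unfolding graded_submodule_def by blast
  obtain g where "r \<in> Rg g" using r unfolding hom_R_def by blast
  then have "graded_submodule sc Mg {z. sc r z \<in> L}" by (rule graded_submodule_colon[OF gm gL])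
  moreover have "L \<subseteq> {z. sc r z \<in> L}" using subspace_scale[OF sL] by blast
  ultimately have colon: "{z. sc r z \<in> L} = L \<or> {z. sc r z \<in> L} = UNIV"
    using maxL by (simp only:)
  show "sc r y \<in> L"
  proof (rule ccontr)
    assume ry: "sc r y \<notin> L"
    with colon have colon_L: "{z. sc r z \<in> L} = L" by auto
    have "sc (r ^ j) y \<notin> L" for j
    proof (induction j)
      case 0
      show ?case using ry subspace_scale[OF sL, of y r] by force
    next
      case (Suc j)
      have "sc (r ^ j) y \<notin> {z. sc r z \<in> L}" using Suc colon_L by simp
      then show ?case by simp
    qed
    moreover have "sc (r ^ n) y \<in> L" using zero subspace_0[OF sL] by simp
    ultimately show False by blast
  qed
qed

lemma scale_subset_if_scale_homogeneous_components:
  assumes gm: "graded_module Rg sc Mg" and gK: "graded_submodule sc Mg K"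
    and sS: "module.subspace sc S"
    and hom: "\<And>m. m \<in> K \<Longrightarrow> m \<in> hom_M Mg \<Longrightarrow> sc r m \<in> S"
  shows "sc r ` K \<subseteq> S"
proof
  interpret module sc using gm unfolding graded_module_def by blast
  fix y assume "y \<in> sc r ` K"
  then obtain x where x: "x \<in> K" and y: "y = sc r x" by blast
  obtain c where dc: "grading_decomp Mg x c" using graded_module_decomp_ex1[OF gm] by blast
  have "subspace K" using gK unfolding graded_submodule_def by blast
  then have K_components: "\<forall>x\<in>K. \<forall>c. grading_decomp Mg x c \<longrightarrow> (\<forall>g. c g \<in> K)"
    using graded_submodule_iff_components[OF gm] gK by blast
  have "sc r (c g) \<in> S" for g
  proof (rule hom)
    show "c g \<in> K" using K_components x dc by blast
    show "c g \<in> hom_M Mg" using dc unfolding grading_decomp_def hom_M_def by blast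
  qed
  then have "(\<Sum>g\<in>{g. c g \<noteq> 0}. sc r (c g)) \<in> S" by (rule subspace_sum[OF sS])
  moreover have "y = (\<Sum>g\<in>{g. c g \<noteq> 0}. sc r (c g))"
    using dc y unfolding grading_decomp_def by (simp add: scale_sum_right)
  ultimately show "y \<in> S" by simp
qed

lemma graded_weakly_Jgr_semiprime_scale_submodule:
  assumes gm: "graded_module Rg sc Mg" and W: "graded_weakly_Jgr_semiprime Rg sc Mg U"
    and r: "r \<in> hom_R Rg" and gK: "graded_submodule sc Mg K" and n: "n > 0"
    and KU: "sc (r ^ n) ` K \<subseteq> U"
  shows "sc r ` K \<subseteq> set_sum U (J_gr sc Mg)"
proof (rule scale_subset_if_scale_homogeneous_components[OF gm gK])
  interpret module sc using gm unfolding graded_module_def by blast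
  have sU: "subspace U" using W unfolding graded_weakly_Jgr_semiprime_def graded_submodule_def by blast
  show "subspace (set_sum U (J_gr sc Mg))"
    using subspace_set_sum[OF module_axioms sU subspace_J_gr[OF gm]] .
  fix m assume mK: "m \<in> K" and m: "m \<in> hom_M Mg"
  show "sc r m \<in> set_sum U (J_gr sc Mg)"
  proof (cases "sc (r ^ n) m = 0")
    case True
    then show ?thesis
      using scale_in_J_gr_if_power_annihilates[OF gm r] set_sum_superset_right subspace_0[OF sU]
      by blast
  next
    case False
    then show ?thesis
      using W r m n KU mK unfolding graded_weakly_Jgr_semiprime_def by blast
  qed
qed

theorem corollary2p6:
  fixes Rg :: "'g::group_add \<Rightarrow> 'r::comm_ring_1 set"
    and sc :: "'r \<Rightarrow> 'm::ab_group_add \<Rightarrow> 'm"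
    and Mg :: "'g \<Rightarrow> 'm set"
    and U :: "'m set"
  assumes "graded_module Rg sc Mg"
    and "graded_submodule sc Mg U"
    and "U \<noteq> UNIV"
  shows "graded_weakly_Jgr_semiprime Rg sc Mg U \<longleftrightarrow>
    (\<forall>r K (n::nat). r \<in> hom_R Rg \<longrightarrow> graded_submodule sc Mg K \<longrightarrow> n > 0 \<longrightarrow>
       (sc (r ^ n) ` K \<noteq> {0} \<and> sc (r ^ n) ` K \<subseteq> U) \<longrightarrow>
       sc r ` K \<subseteq> set_sum U (J_gr sc Mg))"
    (is "_ \<longleftrightarrow> ?submodule_condition")
proof
  assume "graded_weakly_Jgr_semiprime Rg sc Mg U"
  then show ?submodule_condition
    using graded_weakly_Jgr_semiprime_scale_submodule[OF assms(1)] by blast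
next
  assume H: ?submodule_condition
  have "sc r m \<in> set_sum U (J_gr sc Mg)"
    if r: "r \<in> hom_R Rg" and n: "n > 0" and "sc (r ^ n) m \<noteq> 0" "sc (r ^ n) m \<in> U" for r m n
  proof -
    obtain \<delta> where "r ^ n \<in> Rg \<delta>"
      using hom_R_power[OF _ r n] assms(1) unfolding graded_module_def hom_R_def by blast
    then have "graded_submodule sc Mg {z. sc (r ^ n) z \<in> U}"
      by (rule graded_submodule_colon[OF assms(1,2)])
    with H r n that(3,4) show ?thesis by blast
  qed
  with assms(2,3) show "graded_weakly_Jgr_semiprime Rg sc Mg U"
    unfolding graded_weakly_Jgr_semiprime_def by blast
qed

end
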